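(* Let $w=w_1\cdots w_n$ be a word of length $n\ge 2$ such that $w_i\ne w_{n-i+1}$ for some $i$. Then $f(w)\le 2n$.
   Context: A word of length $n$ is a sequence $w=w_1w_2\cdots w_n$ of letters (symbols). Let $[n]=\{1,\dots,n\}$. An $n$-grid is a function $G:[n]^2\to\Sigma$, where $\Sigma$ is an arbitrary set of letters. The $i$th row of $G$ contains $w$ if $G(i,j)=w_j$ for all $1\le j\le n$, or $G(i,j)=w_{n-j+1}$ for all $1\le j\le n$. The $j$th column contains $w$ if $G(i,j)=w_i$ for all $i$, or $G(i,j)=w_{n-i+1}$ for all $i$. The main diagonal contains $w$ if $G(i,i)=w_i$ for all $i$ or $G(i,i)=w_{n-i+1}$ for all $i$; the anti-diagonal contains $w$ if $G(i,n-i+1)=w_i$ for all $i$ or $G(i,n-i+1)=w_{n-i+1}$ for all $i$. Let $f(w,G)$ be the number of the $2n+2$ lines ($n$ rows, $n$ columns, $2$ diagonals) of $G$ that contain $w$, and $f(w)=\max_G f(w,G)$ over all $n$-grids $G$. *)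

theory Defs
  imports Main
begin

text \<open>A word of length n is w :: nat \<Rightarrow> 'a, letters w 1, ..., w n.
  An n-grid is G :: nat \<Rightarrow> nat \<Rightarrow> 'a, with only the values on {1..n} x {1..n} relevant.\<close>

definition row_contains :: "nat \<Rightarrow> (nat \<Rightarrow> 'a) \<Rightarrow> (nat \<Rightarrow> nat \<Rightarrow> 'a) \<Rightarrow> nat \<Rightarrow> bool" where
  "row_contains n w G i \<longleftrightarrow>
     (\<forall>j\<in>{1..n}. G i j = w j) \<or> (\<forall>j\<in>{1..n}. G i j = w (n - j + 1))"

definition col_contains :: "nat \<Rightarrow> (nat \<Rightarrow> 'a) \<Rightarrow> (nat \<Rightarrow> nat \<Rightarrow> 'a) \<Rightarrow> nat \<Rightarrow> bool" where
  "col_contains n w G j \<longleftrightarrow>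
     (\<forall>i\<in>{1..n}. G i j = w i) \<or> (\<forall>i\<in>{1..n}. G i j = w (n - i + 1))"

definition diag_contains :: "nat \<Rightarrow> (nat \<Rightarrow> 'a) \<Rightarrow> (nat \<Rightarrow> nat \<Rightarrow> 'a) \<Rightarrow> bool" where
  "diag_contains n w G \<longleftrightarrow>
     (\<forall>i\<in>{1..n}. G i i = w i) \<or> (\<forall>i\<in>{1..n}. G i i = w (n - i + 1))"

definition antidiag_contains :: "nat \<Rightarrow> (nat \<Rightarrow> 'a) \<Rightarrow> (nat \<Rightarrow> nat \<Rightarrow> 'a) \<Rightarrow> bool" where
  "antidiag_contains n w G \<longleftrightarrow>
     (\<forall>i\<in>{1..n}. G i (n - i + 1) = w i) \<or> (\<forall>i\<in>{1..n}. G i (n - i + 1) = w (n - i + 1))"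

definition lines_count :: "nat \<Rightarrow> (nat \<Rightarrow> 'a) \<Rightarrow> (nat \<Rightarrow> nat \<Rightarrow> 'a) \<Rightarrow> nat" where
  "lines_count n w G =
     card {i\<in>{1..n}. row_contains n w G i} + card {j\<in>{1..n}. col_contains n w G j}
     + (if diag_contains n w G then 1 else 0) + (if antidiag_contains n w G then 1 else 0)"

text \<open>f(w) = max over all n-grids G (with letters in the same alphabet type).\<close>
definition max_lines :: "nat \<Rightarrow> (nat \<Rightarrow> 'a) \<Rightarrow> nat" where
  "max_lines n w = Max {lines_count n w G | G. True}"

end

theory Submission
  imports Defs
begin

text \<open>Pick k with w k \<noteq> w m, where m = n - k + 1, so k \<noteq> m. The four cells of the grid
  in rows k, m and columns k, m are pairwise joined by six of the lines: rows k and m,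
  columns k and m, and the two diagonals. A line containing w carries the two letters
  w k and w m on its two cells, in some order. The six cell pairs form a complete graph
  on four vertices, and in a two-letter colouring of it at most four edges see both
  letters, so at least two of these lines miss w. The other n - 2 rows and n - 2 columns
  add at most 2n - 4, so at most 2n lines contain w.\<close>

lemma card_filter_le_two_points:
  assumes "finite A" "k \<in> A" "m \<in> A" "k \<noteq> m"
  shows "card {x\<in>A. P x} \<le> card A - 2 + of_bool (P k) + of_bool (P m)"
proof -
  have two_points: "{x\<in>{k, m}. P x} = (if P k then {k} else {}) \<union> (if P m then {m} else {})"
    by auto
  have "card {x\<in>A. P x} \<le> card ((A - {k, m}) \<union> {x\<in>{k, m}. P x})"
    using assms(1) by (intro card_mono) auto
  also have "\<dots> \<le> card (A - {k, m}) + card {x\<in>{k, m}. P x}"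
    by (rule card_Un_le)
  also have "card (A - {k, m}) = card A - 2"
    using assms by (subst card_Diff_subset) auto
  also have "card {x\<in>{k, m}. P x} = of_bool (P k) + of_bool (P m)"
    unfolding two_points using assms(4) by simp
  finally show ?thesis by simp
qed

lemma K4_pairs_eq_doubleton_le_4:
  fixes a b p q r s :: 'a
  assumes "a \<noteq> b"
    and "e1 \<Longrightarrow> {p, q} = {a, b}" and "e2 \<Longrightarrow> {r, s} = {a, b}"
    and "e3 \<Longrightarrow> {p, r} = {a, b}" and "e4 \<Longrightarrow> {q, s} = {a, b}"
    and "e5 \<Longrightarrow> {p, s} = {a, b}" and "e6 \<Longrightarrow> {q, r} = {a, b}"
  shows "of_bool e1 + of_bool e2 + of_bool e3 + of_bool e4 + of_bool e5 + of_bool e6 \<le> (4::nat)"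
  using assms unfolding doubleton_eq_iff
  by (cases e1; cases e2; cases e3; cases e4; cases e5; cases e6) auto

lemma mirror_pair_eq:
  fixes n :: nat
  assumes "(\<forall>j\<in>{1..n}. L j = w j) \<or> (\<forall>j\<in>{1..n}. L j = w (n - j + 1))" and "k \<in> {1..n}"
  shows "{L k, L (n - k + 1)} = {w k, w (n - k + 1)}"
proof -
  have mirror: "n - k + 1 \<in> {1..n}" "n - (n - k + 1) + 1 = k" using assms(2) by auto
  from assms(1) show ?thesis
  proof
    assume "\<forall>j\<in>{1..n}. L j = w j"
    thus ?thesis using assms(2) mirror(1) by simp
  next
    assume "\<forall>j\<in>{1..n}. L j = w (n - j + 1)"
    thus ?thesis using assms(2) mirror by (simp add: insert_commute)
  qed
qed

lemma lines_count_le: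
  assumes "\<exists>k\<in>{1..n}. w k \<noteq> w (n - k + 1)"
  shows "lines_count n w G \<le> 2 * n"
proof -
  obtain k where k: "k \<in> {1..n}" and w_k: "w k \<noteq> w (n - k + 1)" using assms by blast
  define m where "m = n - k + 1"
  have w_km: "w k \<noteq> w m" using w_k unfolding m_def .
  have m: "m \<in> {1..n}" "k \<noteq> m" using k w_km unfolding m_def by auto
  have "n \<ge> 2" using k m(2) unfolding m_def by auto
  have rows: "card {i\<in>{1..n}. row_contains n w G i}
      \<le> n - 2 + of_bool (row_contains n w G k) + of_bool (row_contains n w G m)"
    using card_filter_le_two_points[OF _ k m(1,2)] by simp
  have cols: "card {j\<in>{1..n}. col_contains n w G j}
      \<le> n - 2 + of_bool (col_contains n w G k) + of_bool (col_contains n w G m)"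
    using card_filter_le_two_points[OF _ k m(1,2)] by simp
  have mirror: "n - m + 1 = k" using k unfolding m_def by auto
  have corners: "of_bool (row_contains n w G k) + of_bool (row_contains n w G m)
      + of_bool (col_contains n w G k) + of_bool (col_contains n w G m)
      + of_bool (diag_contains n w G) + of_bool (antidiag_contains n w G) \<le> (4::nat)"
  proof (rule K4_pairs_eq_doubleton_le_4[OF w_km, where p = "G k k" and q = "G k m"
        and r = "G m k" and s = "G m m"])
    show "{G k k, G k m} = {w k, w m}" if "row_contains n w G k"
      using mirror_pair_eq[OF that[unfolded row_contains_def] k] unfolding m_def .
    show "{G m k, G m m} = {w k, w m}" if "row_contains n w G m"
      using mirror_pair_eq[OF that[unfolded row_contains_def] k] unfolding m_def .
    show "{G k k, G m k} = {w k, w m}" if "col_contains n w G k"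
      using mirror_pair_eq[OF that[unfolded col_contains_def] k] unfolding m_def .
    show "{G k m, G m m} = {w k, w m}" if "col_contains n w G m"
      using mirror_pair_eq[OF that[unfolded col_contains_def] k] unfolding m_def .
    show "{G k k, G m m} = {w k, w m}" if "diag_contains n w G"
      using mirror_pair_eq[OF that[unfolded diag_contains_def] k] unfolding m_def .
    show "{G k m, G m k} = {w k, w m}" if "antidiag_contains n w G"
      using mirror_pair_eq[OF that[unfolded antidiag_contains_def] k]
      unfolding m_def[symmetric] mirror .
  qed
  show ?thesis
    using rows cols corners \<open>n \<ge> 2\<close> unfolding lines_count_def of_bool_def by linarith
qed

lemma max_lines_le:
  assumes "\<And>G. lines_count n w G \<le> B"
  shows "max_lines n w \<le> B"
  unfolding max_lines_def
proof (rule Max.boundedI)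
  have "{lines_count n w G | G. True} \<subseteq> {..B}" using assms by blast
  thus "finite {lines_count n w G | G. True}" by (rule finite_subset) simp
qed (use assms in blast)+

theorem lemma11:
  fixes n :: nat and w :: "nat \<Rightarrow> 'a"
  assumes "n \<ge> 2"
    and "\<exists>i\<in>{1..n}. w i \<noteq> w (n - i + 1)"
  shows "max_lines n w \<le> 2 * n"
  using lines_count_le[OF assms(2)] by (rule max_lines_le)

end
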